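(* Let $\mathbf{I}=\{1,\dots,N\}$ and assume $\sup_{i}\sum_{v\in\mathbf{V}^i}P(v)\lambda^i(v)<1$. Assume further that there exists $R>0$ such that for all positive vectors $\theta\in B(0,R)$, $$\sup_i\phi_i(\theta)=\sup_i\sum_{j=1}^N\log\Big(\sum_{v\in\mathbf{V}^i}\lambda^i(v)\exp\big[(e^{\theta_j}-1)\Gamma^j\mu(p_j(v))\big]\Big)<\infty.$$ Then: 1. There exists $r\in(0,R)$ such that for all $\theta\in B(0,r)$, $\Phi_i(\theta)<\infty$ for all $i$, and $\Phi(\theta)=\theta+\phi(\Phi(\theta))$. 2. For $0\le\vartheta<r$ there exists a constant $c_0$ (depending on $i$ and the offspring law) such that for all $x>0$, $$\mathbb{P}_i\big(W^i>\mathbb{E}_i(W^i)+x\big)\le c_0e^{-\vartheta x}.$$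
   Context: For each $i\in\{1,\dots,N\}$, $\Gamma^i>0$, $\mathbf{V}^i$ is a countable family of finite neighborhoods (Borel subsets of $\{1,\dots,N\}\times(-\infty,0)$ with bounded time extent) and $\lambda^i$ is a probability on $\mathbf{V}^i$; $\mu$ is Lebesgue measure, $p_j(v)=\{s:(j,s)\in v\}$, and $P(v)=\sum_{j}\Gamma^j\mu(p_j(v))$. Consider the multitype branching process in which each particle of type $i$, independently of everything else, picks a neighborhood $V\sim\lambda^i$ and then, given $V=v$, produces $X^i_j$ children of type $j$, where $X^i_j$ has Poisson law with mean $\Gamma^j\mu(p_j(v))$ (independently over $j$ given $V$); $X^i=(X^i_1,\dots,X^i_N)$. Under $\mathbb{P}_i$ the process starts from one particle of type $i$; $K^i(n)\in\mathbb{N}^N$ is the vector of numbers of particles of each type in generation $n$, $K^i(0)=e_i$; $W^i(\infty)=\sum_{k\ge0}K^i(k)$ and $W^i=\sum_jW^i_j(\infty)$ is the total number of particles. Define $\phi_i(\theta)=\log\mathbb{E}_i(e^{\theta^TX^i})$, $\phi=(\phi_1,\dots,\phi_N)^T$, $\Phi_i(\theta)=\log\mathbb{E}_i(e^{\theta^TW^i(\infty)})$, $\Phi=(\Phi_1,\dots,\Phi_N)^T$. $B(0,r)$ is the open ball of radius $r$ for $\|x\|_\infty=\max_i|x_i|$; a positive vector has all components positive. *)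

theory Defs
  imports "HOL-Probability.Probability"
begin

definition pois :: "real \<Rightarrow> nat pmf" where
  "pois a = (if 0 < a then poisson_pmf a else return_pmf 0)"

definition psec :: "nat \<Rightarrow> (nat \<times> real) set \<Rightarrow> real set" where
  "psec j v = {s. (j, s) \<in> v}"

definition Pv :: "nat \<Rightarrow> (nat \<Rightarrow> real) \<Rightarrow> (nat \<times> real) set \<Rightarrow> real" where
  "Pv N Gam v = (\<Sum>j\<in>{1..N}. Gam j * measure lborel (psec j v))"

definition offspring :: "nat \<Rightarrow> (nat \<Rightarrow> real) \<Rightarrow> (nat \<Rightarrow> (nat \<times> real) set pmf)
    \<Rightarrow> nat \<Rightarrow> (nat \<Rightarrow> nat) pmf" where
  "offspring N Gam lam i =
     bind_pmf (lam i) (\<lambda>v. Pi_pmf {1..N} 0 (\<lambda>j. pois (Gam j * measure lborel (psec j v))))"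

text \<open>Ulam--Harris labels: a particle is a list of (type, index) steps from the root.
  The type of the root is i, the type of any other particle is the type recorded
  in its last step.\<close>
definition ptype :: "nat \<Rightarrow> (nat \<times> nat) list \<Rightarrow> nat" where
  "ptype i u = (if u = [] then i else fst (last u))"

text \<open>The branching process under P_i: independent offspring vectors omega(u) for
  every potential particle u, with law of X^(type u).\<close>
definition GW :: "nat \<Rightarrow> (nat \<Rightarrow> real) \<Rightarrow> (nat \<Rightarrow> (nat \<times> real) set pmf)
    \<Rightarrow> nat \<Rightarrow> ((nat \<times> nat) list \<Rightarrow> nat \<Rightarrow> nat) measure" where
  "GW N Gam lam i =
     PiM UNIV (\<lambda>u. measure_pmf (offspring N Gam lam (ptype i u)))"

definition alive :: "nat \<Rightarrow> ((nat \<times> nat) list \<Rightarrow> nat \<Rightarrow> nat) \<Rightarrow> (nat \<times> nat) list \<Rightarrow> bool" where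
  "alive N \<omega> u \<longleftrightarrow>
     (\<forall>n < length u. fst (u ! n) \<in> {1..N} \<and> snd (u ! n) < \<omega> (take n u) (fst (u ! n)))"

definition Kgen :: "nat \<Rightarrow> nat \<Rightarrow> nat \<Rightarrow> nat \<Rightarrow> ((nat \<times> nat) list \<Rightarrow> nat \<Rightarrow> nat) \<Rightarrow> nat" where
  "Kgen N i n j \<omega> = card {u. alive N \<omega> u \<and> length u = n \<and> ptype i u = j}"

text \<open>W^i_j(infinity) = sum over k of K^i(k)_j: total number of type-j particles
  (card of an infinite set is 0; W is a.s. finite under the hypotheses).\<close>
definition Wvec :: "nat \<Rightarrow> nat \<Rightarrow> nat \<Rightarrow> ((nat \<times> nat) list \<Rightarrow> nat \<Rightarrow> nat) \<Rightarrow> nat" where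
  "Wvec N i j \<omega> = card {u. alive N \<omega> u \<and> ptype i u = j}"

definition Wtot :: "nat \<Rightarrow> nat \<Rightarrow> ((nat \<times> nat) list \<Rightarrow> nat \<Rightarrow> nat) \<Rightarrow> nat" where
  "Wtot N i \<omega> = (\<Sum>j\<in>{1..N}. Wvec N i j \<omega>)"

definition mgfX :: "nat \<Rightarrow> (nat \<Rightarrow> real) \<Rightarrow> (nat \<Rightarrow> (nat \<times> real) set pmf)
    \<Rightarrow> nat \<Rightarrow> (nat \<Rightarrow> real) \<Rightarrow> ennreal" where
  "mgfX N Gam lam i \<theta> =
     (\<integral>\<^sup>+ x. ennreal (exp (\<Sum>j\<in>{1..N}. \<theta> j * real (x j))) \<partial>measure_pmf (offspring N Gam lam i))"

definition mgfW :: "nat \<Rightarrow> (nat \<Rightarrow> real) \<Rightarrow> (nat \<Rightarrow> (nat \<times> real) set pmf)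
    \<Rightarrow> nat \<Rightarrow> (nat \<Rightarrow> real) \<Rightarrow> ennreal" where
  "mgfW N Gam lam i \<theta> =
     (\<integral>\<^sup>+ \<omega>. ennreal (exp (\<Sum>j\<in>{1..N}. \<theta> j * real (Wvec N i j \<omega>))) \<partial>GW N Gam lam i)"

text \<open>phi_i and Phi_i (log of the above; meaningful where finite).\<close>
definition phi :: "nat \<Rightarrow> (nat \<Rightarrow> real) \<Rightarrow> (nat \<Rightarrow> (nat \<times> real) set pmf)
    \<Rightarrow> nat \<Rightarrow> (nat \<Rightarrow> real) \<Rightarrow> real" where
  "phi N Gam lam i \<theta> = ln (enn2real (mgfX N Gam lam i \<theta>))"

definition Phi :: "nat \<Rightarrow> (nat \<Rightarrow> real) \<Rightarrow> (nat \<Rightarrow> (nat \<times> real) set pmf)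
    \<Rightarrow> nat \<Rightarrow> (nat \<Rightarrow> real) \<Rightarrow> real" where
  "Phi N Gam lam i \<theta> = ln (enn2real (mgfW N Gam lam i \<theta>))"

end

(* Write |X^i| for the total number of children of a type-i particle. Subcriticality and the
   exponential moment of the offspring law give, for small b > 0, E_i exp(b |X^i|) < e^b, hence E_i exp(b |X^i|) <= e^(b-r) for some r > 0 and all types i.
   By the branching property (the subtrees rooted at the children of the root are independent
   copies of the process started from their types) and induction over generations,
   E_i exp(r * #particles in the first n generations) <= e^b for all n. Monotone convergence
   then makes the population almost surely finite with E_i exp(r W^i) <= e^b. For |theta| < r,
   conditioning on the first generation gives
   E_i exp(theta^T W^i) = e^(theta_i) E_i prod_j (E_j exp(theta^T W^j))^(X^i_j),
   which is Phi = theta + phi(Phi), and the tail bound is Chernoff's inequality. *)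

theory Submission
  imports Defs
begin

section \<open>Ulam--Harris trees\<close>

type_synonym gw_sample = "(nat \<times> nat) list \<Rightarrow> nat \<Rightarrow> nat"

definition subtree :: "nat \<times> nat \<Rightarrow> gw_sample \<Rightarrow> gw_sample" where
  "subtree c \<omega> = (\<lambda>u. \<omega> (c # u))"

definition children :: "nat \<Rightarrow> (nat \<Rightarrow> nat) \<Rightarrow> (nat \<times> nat) set" where
  "children N x = Sigma {1..N} (\<lambda>j. {..<x j})"

definition population :: "nat \<Rightarrow> gw_sample \<Rightarrow> (nat \<times> nat) list set" where
  "population N \<omega> = {u. alive N \<omega> u}"

definition population_below :: "nat \<Rightarrow> nat \<Rightarrow> gw_sample \<Rightarrow> (nat \<times> nat) list set" where
  "population_below N n \<omega> = {u. alive N \<omega> u \<and> length u < n}"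

lemma ptype_Cons: "ptype i (c # u) = ptype (fst c) u"
  by (simp add: ptype_def)

lemma alive_Cons:
  "alive N \<omega> (c # u) \<longleftrightarrow> fst c \<in> {1..N} \<and> snd c < \<omega> [] (fst c) \<and> alive N (subtree c \<omega>) u"
proof -
  have "alive N \<omega> (c # u) \<longleftrightarrow> (\<forall>n < Suc (length u). fst ((c # u) ! n) \<in> {1..N} \<and>
      snd ((c # u) ! n) < \<omega> (take n (c # u)) (fst ((c # u) ! n)))"
    by (simp add: alive_def)
  also have "\<dots> \<longleftrightarrow> (fst c \<in> {1..N} \<and> snd c < \<omega> [] (fst c)) \<and>
      (\<forall>n < length u. fst (u ! n) \<in> {1..N} \<and> snd (u ! n) < \<omega> (c # take n u) (fst (u ! n)))"
    by (simp only: All_less_Suc2) simp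
  finally show ?thesis by (simp add: alive_def subtree_def)
qed

lemma ptype_alive:
  assumes "alive N \<omega> u" "i \<in> {1..N}"
  shows "ptype i u \<in> {1..N}"
proof (cases u rule: rev_cases)
  case (snoc v c)
  then have "fst c \<in> {1..N}"
    using assms(1) unfolding alive_def by (auto dest!: spec[of _ "length v"])
  then show ?thesis using snoc by (simp add: ptype_def)
qed (use assms in \<open>simp add: ptype_def\<close>)

lemma mem_children: "c \<in> children N x \<longleftrightarrow> fst c \<in> {1..N} \<and> snd c < x (fst c)"
  by (cases c) (auto simp: children_def)

lemma finite_children [simp]: "finite (children N x)"
  by (simp add: children_def)

lemma sum_children: "(\<Sum>c\<in>children N x. f c) = (\<Sum>j\<in>{1..N}. \<Sum>k<x j. f (j, k))"
  unfolding children_def by (subst sum.Sigma) auto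

lemma prod_children: "(\<Prod>c\<in>children N x. f c) = (\<Prod>j\<in>{1..N}. \<Prod>k<x j. f (j, k))"
  unfolding children_def by (subst prod.Sigma) auto

lemma population_decomp:
  "population N \<omega> = insert [] (\<Union>c\<in>children N (\<omega> []). Cons c ` population N (subtree c \<omega>))"
proof (rule set_eqI)
  fix u
  show "u \<in> population N \<omega> \<longleftrightarrow>
      u \<in> insert [] (\<Union>c\<in>children N (\<omega> []). Cons c ` population N (subtree c \<omega>))"
    by (cases u) (auto simp: population_def alive_def[of _ _ "[]"] alive_Cons mem_children)
qed

lemma population_below_Suc:
  "population_below N (Suc n) \<omega> =
     insert [] (\<Union>c\<in>children N (\<omega> []). Cons c ` population_below N n (subtree c \<omega>))"
proof (rule set_eqI)
  fix u
  show "u \<in> population_below N (Suc n) \<omega> \<longleftrightarrow>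
      u \<in> insert [] (\<Union>c\<in>children N (\<omega> []). Cons c ` population_below N n (subtree c \<omega>))"
    by (cases u) (auto simp: population_below_def alive_def[of _ _ "[]"] alive_Cons mem_children)
qed

lemma finite_population_below [simp]: "finite (population_below N n \<omega>)"
  by (induction n arbitrary: \<omega>) (simp_all add: population_below_def[of _ 0] population_below_Suc)

lemma population_below_mono: "n \<le> m \<Longrightarrow> population_below N n \<omega> \<subseteq> population_below N m \<omega>"
  by (auto simp: population_below_def)

lemma eventually_population_below_eq:
  assumes "finite (population N \<omega>)"
  shows "eventually (\<lambda>n. population_below N n \<omega> = population N \<omega>) sequentially"
proof (rule eventually_sequentiallyI)
  fix n assume "Suc (Max (length ` population N \<omega>)) \<le> n"
  then show "population_below N n \<omega> = population N \<omega>"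
  proof (intro set_eqI iffI)
    fix u assume "u \<in> population N \<omega>"
    then have "length u \<le> Max (length ` population N \<omega>)"
      using assms by (intro Max_ge) auto
    with \<open>u \<in> population N \<omega>\<close> show "u \<in> population_below N n \<omega>"
      using \<open>Suc (Max (length ` population N \<omega>)) \<le> n\<close>
      by (simp add: population_below_def population_def)
  qed (simp add: population_below_def population_def)
qed

lemma finite_population_if_bounded:
  assumes "\<And>n. card (population_below N n \<omega>) \<le> K"
  shows "finite (population N \<omega>)"
proof (rule ccontr)
  assume "infinite (population N \<omega>)"
  then obtain S where S: "S \<subseteq> population N \<omega>" "finite S" "card S = Suc K"
    by (meson infinite_arbitrarily_large)
  then have "S \<subseteq> population_below N (Suc (Max (length ` S))) \<omega>"
    by (auto simp: population_below_def population_def less_Suc_eq_le intro!: Max_ge)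
  then have "card S \<le> card (population_below N (Suc (Max (length ` S))) \<omega>)"
    by (intro card_mono) auto
  with assms S(3) show False by (metis not_less_eq_eq)
qed

lemma finite_population_subtree:
  assumes "finite (population N \<omega>)" "c \<in> children N (\<omega> [])"
  shows "finite (population N (subtree c \<omega>))"
proof -
  have "Cons c ` population N (subtree c \<omega>) \<subseteq> population N \<omega>"
    using assms(2) by (subst (2) population_decomp) auto
  then have "finite (Cons c ` population N (subtree c \<omega>))"
    using assms(1) finite_subset by blast
  then show ?thesis by (rule finite_imageD) simp
qed

lemma sum_insert_Nil_Cons:
  fixes f :: "'a list \<Rightarrow> 'b::comm_monoid_add"
  assumes "finite C" "\<And>c. c \<in> C \<Longrightarrow> finite (S c)"
  shows "(\<Sum>u\<in>insert [] (\<Union>c\<in>C. Cons c ` S c). f u) = f [] + (\<Sum>c\<in>C. \<Sum>u\<in>S c. f (c # u))"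
proof -
  have "disjoint_family_on (\<lambda>c. Cons c ` S c) C"
    by (auto simp: disjoint_family_on_def)
  then have "(\<Sum>u\<in>(\<Union>c\<in>C. Cons c ` S c). f u) = (\<Sum>c\<in>C. \<Sum>u\<in>S c. f (c # u))"
    using assms by (simp add: sum.UNION_disjoint_family sum.reindex)
  then show ?thesis
    using assms by (subst sum.insert) auto
qed

section \<open>The branching property\<close>

definition sample_space :: "gw_sample measure" where
  "sample_space = PiM UNIV (\<lambda>_. count_space UNIV)"

lemma sets_GW: "sets (GW N Gam lam i) = sets sample_space"
  unfolding GW_def sample_space_def
  by (intro sets_PiM_cong) (auto simp: sets_measure_pmf_count_space)

lemma space_sample_space [simp]: "space sample_space = UNIV"
  by (simp add: sample_space_def space_PiM)

lemma space_GW [simp]: "space (GW N Gam lam i) = UNIV"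
  using sets_eq_imp_space_eq[OF sets_GW] by simp

lemma prob_space_GW: "prob_space (GW N Gam lam i)"
  unfolding GW_def by (intro prob_space_PiM) (simp add: prob_space_measure_pmf)

lemma measurable_GW_eq:
  "measurable (GW N Gam lam i) M = measurable sample_space M"
  "measurable M (GW N Gam lam i) = measurable M sample_space"
  by (simp_all only: measurable_cong_sets[OF sets_GW refl] measurable_cong_sets[OF refl sets_GW])

lemma measurable_label [measurable]: "(\<lambda>\<omega>. \<omega> u) \<in> measurable sample_space (count_space UNIV)"
  unfolding sample_space_def by (rule measurable_component_singleton) simp

lemma measurable_root_offspring [measurable]:
  "(\<lambda>\<omega>. \<omega> [] j) \<in> measurable sample_space (count_space UNIV)"
  using measurable_compose[OF measurable_label measurable_count_space[of "\<lambda>x. x j" UNIV]]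
  by simp

lemma measurable_subtree [measurable]: "subtree c \<in> measurable sample_space sample_space"
  unfolding sample_space_def subtree_def
  by (rule measurable_PiM_single') (auto simp: measurable_component_singleton space_PiM)

lemma measurable_prod_subtrees:
  fixes g :: "nat \<Rightarrow> gw_sample \<Rightarrow> ennreal"
  assumes "\<And>j. g j \<in> borel_measurable sample_space"
  shows "(\<lambda>\<omega>. \<Prod>j\<in>{1..N}. \<Prod>k<\<omega> [] j. g j (subtree (j, k) \<omega>)) \<in> borel_measurable sample_space"
proof (rule borel_measurable_prod_ennreal)
  fix j
  show "(\<lambda>\<omega>. \<Prod>k<\<omega> [] j. g j (subtree (j, k) \<omega>)) \<in> borel_measurable sample_space"
  proof (rule measurable_compose_countable'[where f="\<lambda>m \<omega>. \<Prod>k<m. g j (subtree (j, k) \<omega>)" and I=UNIV])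
    fix m :: nat
    show "(\<lambda>\<omega>. \<Prod>k<m. g j (subtree (j, k) \<omega>)) \<in> borel_measurable sample_space"
      using assms by (intro borel_measurable_prod_ennreal) (rule measurable_compose[OF measurable_subtree])
  qed auto
qed

lemma cylinder_PiM_UNIV:
  fixes M :: "'i \<Rightarrow> 'a measure"
  assumes M: "\<And>k. prob_space (M k)" "\<And>k. space (M k) = UNIV"
    and J: "finite J" and A: "\<And>u. u \<in> J \<Longrightarrow> A u \<in> sets (M u)"
  shows "{\<omega>. \<forall>u\<in>J. \<omega> u \<in> A u} \<in> sets (PiM UNIV M)"
    and "emeasure (PiM UNIV M) {\<omega>. \<forall>u\<in>J. \<omega> u \<in> A u} = (\<Prod>u\<in>J. emeasure (M u) (A u))"
proof -
  have emb: "prod_emb UNIV M J (Pi\<^sub>E J A) = {\<omega>. \<forall>u\<in>J. \<omega> u \<in> A u}"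
    using M(2) by (auto simp: prod_emb_def space_PiM restrict_PiE_iff)
  show "{\<omega>. \<forall>u\<in>J. \<omega> u \<in> A u} \<in> sets (PiM UNIV M)"
    unfolding emb[symmetric] using J A by (intro sets_PiM_I) auto
  show "emeasure (PiM UNIV M) {\<omega>. \<forall>u\<in>J. \<omega> u \<in> A u} = (\<Prod>u\<in>J. emeasure (M u) (A u))"
    unfolding emb[symmetric] using M J A by (intro emeasure_PiM_emb) auto
qed

lemma nn_integral_PiM_prod:
  fixes M :: "'i \<Rightarrow> 'a measure" and G :: "'i \<Rightarrow> 'a \<Rightarrow> ennreal"
  assumes M: "\<And>c. prob_space (M c)" and C: "finite C"
    and G: "\<And>c. G c \<in> borel_measurable (M c)"
  shows "(\<integral>\<^sup>+\<omega>. (\<Prod>c\<in>C. G c (\<omega> c)) \<partial>PiM UNIV M) = (\<Prod>c\<in>C. \<integral>\<^sup>+z. G c z \<partial>M c)"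
proof -
  interpret product_prob_space M UNIV
    using M by (simp add: product_prob_space_def product_prob_space_axioms_def
        product_sigma_finite_def prob_space_imp_sigma_finite)
  have restrict: "(\<lambda>\<omega>. restrict \<omega> C) \<in> measurable (PiM UNIV M) (PiM C M)"
    by (rule measurable_restrict_subset) simp
  have "(\<lambda>z. \<Prod>c\<in>C. G c (z c)) \<in> borel_measurable (PiM C M)"
    using G by (intro borel_measurable_prod_ennreal)
      (rule measurable_compose[OF measurable_component_singleton], auto)
  then have "(\<integral>\<^sup>+\<omega>. (\<Prod>c\<in>C. G c (restrict \<omega> C c)) \<partial>PiM UNIV M) =
      (\<integral>\<^sup>+z. (\<Prod>c\<in>C. G c (z c)) \<partial>PiM C M)"
    using restrict C by (subst distr_PiM_restrict_finite[symmetric, of C]) (auto simp: nn_integral_distr)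
  also have "\<dots> = (\<Prod>c\<in>C. \<integral>\<^sup>+z. G c z \<partial>M c)"
    using C G by (rule product_nn_integral_prod)
  finally show ?thesis by simp
qed

definition graft :: "(nat \<Rightarrow> nat) \<times> (nat \<times> nat \<Rightarrow> gw_sample) \<Rightarrow> gw_sample" where
  "graft p = (\<lambda>u. case u of [] \<Rightarrow> fst p | c # u' \<Rightarrow> snd p c u')"

definition subtree_law :: "nat \<Rightarrow> (nat \<Rightarrow> real) \<Rightarrow> (nat \<Rightarrow> (nat \<times> real) set pmf)
    \<Rightarrow> (nat \<times> nat \<Rightarrow> gw_sample) measure" where
  "subtree_law N Gam lam = PiM UNIV (\<lambda>c. GW N Gam lam (fst c))"

lemma prob_space_subtree_law: "prob_space (subtree_law N Gam lam)"
  unfolding subtree_law_def by (intro prob_space_PiM prob_space_GW)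

lemma space_subtree_law [simp]: "space (subtree_law N Gam lam) = UNIV"
  by (simp add: subtree_law_def space_PiM)

lemma subtree_graft [simp]: "subtree c (graft (x, ws)) = ws c"
  by (simp add: subtree_def graft_def)

lemma graft_Nil [simp]: "graft (x, ws) [] = x"
  by (simp add: graft_def)

lemma measurable_graft [measurable]:
  "graft \<in> measurable (measure_pmf p \<Otimes>\<^sub>M subtree_law N Gam lam) sample_space"
proof -
  let ?P = "count_space UNIV \<Otimes>\<^sub>M PiM UNIV (\<lambda>_::nat \<times> nat. sample_space)"
  have sets: "sets (measure_pmf p \<Otimes>\<^sub>M subtree_law N Gam lam) = sets ?P"
    unfolding subtree_law_def
    by (intro sets_pair_measure_cong sets_PiM_cong) (auto simp: sets_measure_pmf_count_space sets_GW)
  have "(\<lambda>p. snd p c) \<in> measurable ?P sample_space" for c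
    by (rule measurable_compose[OF measurable_snd measurable_component_singleton]) simp
  then have "(\<lambda>p. snd p c u') \<in> measurable ?P (count_space UNIV)" for c u'
    by (rule measurable_compose[OF _ measurable_label])
  then have "(\<lambda>p. graft p u) \<in> measurable ?P (count_space UNIV)" for u
    by (cases u) (simp_all add: graft_def)
  then have "graft \<in> measurable ?P sample_space"
    unfolding sample_space_def by (intro measurable_PiM_single') (auto simp: space_PiM)
  then show ?thesis by (subst measurable_cong_sets[OF sets refl])
qed

lemma prod_split_Nil_Cons:
  fixes h :: "(nat \<times> nat) list \<Rightarrow> 'a::comm_monoid_mult"
  assumes "finite J"
  shows "(\<Prod>u\<in>J. h u) = (if [] \<in> J then h [] else 1) *
     (\<Prod>c\<in>hd ` (J - {[]}). \<Prod>u'\<in>{u'. c # u' \<in> J}. h (c # u'))"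
proof -
  have fin: "finite {u'. c # u' \<in> J}" for c
    using finite_vimageI[OF assms, of "Cons c"] by (simp add: vimage_def)
  have bij: "bij_betw (\<lambda>(c, u'). c # u') (SIGMA c:hd ` (J - {[]}). {u'. c # u' \<in> J}) (J - {[]})"
  proof (rule bij_betw_imageI)
    show "(\<lambda>(c, u'). c # u') ` (SIGMA c:hd ` (J - {[]}). {u'. c # u' \<in> J}) = J - {[]}"
    proof (intro set_eqI iffI)
      fix u assume "u \<in> J - {[]}"
      then show "u \<in> (\<lambda>(c, u'). c # u') ` (SIGMA c:hd ` (J - {[]}). {u'. c # u' \<in> J})"
        by (cases u) (auto intro!: image_eqI[of _ _ "(hd u, tl u)"])
    qed auto
  qed (auto simp: inj_on_def)
  have "(\<Prod>c\<in>hd ` (J - {[]}). \<Prod>u'\<in>{u'. c # u' \<in> J}. h (c # u')) = (\<Prod>u\<in>J - {[]}. h u)"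
    using assms fin
    by (subst prod.Sigma) (auto simp: split_beta intro!: prod.reindex_bij_betw[OF bij, simplified split_beta])
  then show ?thesis
    using assms by (cases "[] \<in> J") (simp_all add: prod.remove)
qed

lemma graft_preimage_cylinder:
  "graft -` {\<omega>. \<forall>u\<in>J. \<omega> u \<in> A u} =
     {x. [] \<in> J \<longrightarrow> x \<in> A []} \<times>
     {ws. \<forall>c\<in>hd ` (J - {[]}). ws c \<in> {\<omega>. \<forall>u'\<in>{u'. c # u' \<in> J}. \<omega> u' \<in> A (c # u')}}"
proof (intro set_eqI iffI)
  fix p assume "p \<in> graft -` {\<omega>. \<forall>u\<in>J. \<omega> u \<in> A u}"
  then show "p \<in> {x. [] \<in> J \<longrightarrow> x \<in> A []} \<times>
      {ws. \<forall>c\<in>hd ` (J - {[]}). ws c \<in> {\<omega>. \<forall>u'\<in>{u'. c # u' \<in> J}. \<omega> u' \<in> A (c # u')}}"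
    by (cases p) (force simp: graft_def)
next
  fix p assume p: "p \<in> {x. [] \<in> J \<longrightarrow> x \<in> A []} \<times>
      {ws. \<forall>c\<in>hd ` (J - {[]}). ws c \<in> {\<omega>. \<forall>u'\<in>{u'. c # u' \<in> J}. \<omega> u' \<in> A (c # u')}}"
  have "graft p u \<in> A u" if "u \<in> J" for u
    using p that by (cases u) (force simp: graft_def)+
  then show "p \<in> graft -` {\<omega>. \<forall>u\<in>J. \<omega> u \<in> A u}" by blast
qed

lemma cylinder_GW:
  assumes "finite J"
  shows "{\<omega>. \<forall>u\<in>J. \<omega> u \<in> A u} \<in> sets (GW N Gam lam i)"
    and "emeasure (GW N Gam lam i) {\<omega>. \<forall>u\<in>J. \<omega> u \<in> A u} =
      (\<Prod>u\<in>J. emeasure (offspring N Gam lam (ptype i u)) (A u))"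
  unfolding GW_def using assms by (simp_all add: cylinder_PiM_UNIV prob_space_measure_pmf)

lemma cylinder_subtree_law:
  assumes "finite C" "\<And>c. finite (J c)"
  shows "{ws. \<forall>c\<in>C. ws c \<in> {\<omega>. \<forall>u\<in>J c. \<omega> u \<in> A c u}} \<in> sets (subtree_law N Gam lam)"
    and "emeasure (subtree_law N Gam lam) {ws. \<forall>c\<in>C. ws c \<in> {\<omega>. \<forall>u\<in>J c. \<omega> u \<in> A c u}} =
      (\<Prod>c\<in>C. \<Prod>u\<in>J c. emeasure (offspring N Gam lam (ptype (fst c) u)) (A c u))"
proof -
  note cylinder = cylinder_PiM_UNIV[of "\<lambda>c. GW N Gam lam (fst c)" C "\<lambda>c. {\<omega>. \<forall>u\<in>J c. \<omega> u \<in> A c u}",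
      OF prob_space_GW space_GW assms(1) cylinder_GW(1)[OF assms(2)]]
  show "{ws. \<forall>c\<in>C. ws c \<in> {\<omega>. \<forall>u\<in>J c. \<omega> u \<in> A c u}} \<in> sets (subtree_law N Gam lam)"
    unfolding subtree_law_def by (rule cylinder(1))
  show "emeasure (subtree_law N Gam lam) {ws. \<forall>c\<in>C. ws c \<in> {\<omega>. \<forall>u\<in>J c. \<omega> u \<in> A c u}} =
      (\<Prod>c\<in>C. \<Prod>u\<in>J c. emeasure (offspring N Gam lam (ptype (fst c) u)) (A c u))"
    unfolding subtree_law_def cylinder(2) cylinder_GW(2)[OF assms(2)] ..
qed

text \<open>Under \<open>GW N Gam lam i\<close>, the offspring vector of the root and the subtrees below all
  potential children \<open>c\<close> are independent, the subtree below \<open>c\<close> having law \<open>GW N Gam lam (fst c)\<close>.\<close>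
lemma distr_graft_GW:
  "distr (measure_pmf (offspring N Gam lam i) \<Otimes>\<^sub>M subtree_law N Gam lam) (GW N Gam lam i) graft =
     GW N Gam lam i"
  (is "distr ?P ?G graft = ?G")
proof (rule measure_eqI_PiM_infinite[symmetric])
  let ?M = "\<lambda>u. measure_pmf (offspring N Gam lam (ptype i u))"
  interpret S: prob_space "subtree_law N Gam lam" by (rule prob_space_subtree_law)
  interpret G: prob_space ?G by (rule prob_space_GW)
  show "sets ?G = sets (PiM UNIV ?M)" "sets (distr ?P ?G graft) = sets (PiM UNIV ?M)"
    by (simp_all add: GW_def)
  show "finite_measure ?G" by (rule G.finite_measure_axioms)
  fix J :: "(nat \<times> nat) list set" and A
  assume J: "finite J" and "J \<subseteq> UNIV" and "\<And>u. u \<in> J \<Longrightarrow> A u \<in> sets (?M u)"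
  let ?C = "hd ` (J - {[]})"
  let ?Y = "{ws. \<forall>c\<in>?C. ws c \<in> {\<omega>. \<forall>u'\<in>{u'. c # u' \<in> J}. \<omega> u' \<in> A (c # u')}}"
  have fin: "finite ?C" "finite {u'. c # u' \<in> J}" for c
    using J finite_vimageI[OF J, of "Cons c"] by (simp_all add: vimage_def)
  have pmf_sets: "X \<in> sets (measure_pmf p)" for p :: "(nat \<Rightarrow> nat) pmf" and X
    by simp
  have graft: "graft \<in> measurable ?P ?G"
    using measurable_graft by (simp only: measurable_GW_eq)
  have "emeasure (distr ?P ?G graft) {\<omega>. \<forall>u\<in>J. \<omega> u \<in> A u} = emeasure ?P ({x. [] \<in> J \<longrightarrow> x \<in> A []} \<times> ?Y)"
    using graft_preimage_cylinder[of J A]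
    by (simp add: emeasure_distr[OF graft cylinder_GW(1)[OF J]] space_pair_measure)
  also have "\<dots> = emeasure (offspring N Gam lam i) {x. [] \<in> J \<longrightarrow> x \<in> A []} *
      (\<Prod>c\<in>?C. \<Prod>u'\<in>{u'. c # u' \<in> J}. emeasure (?M (c # u')) (A (c # u')))"
    unfolding S.emeasure_pair_measure_Times[OF pmf_sets cylinder_subtree_law(1)[OF fin]]
      cylinder_subtree_law(2)[OF fin] ptype_Cons ..
  also have "\<dots> = (\<Prod>u\<in>J. emeasure (?M u) (A u))"
    unfolding prod_split_Nil_Cons[OF J] by (simp add: ptype_def measure_pmf.emeasure_space_1[simplified])
  also have "\<dots> = emeasure ?G {\<omega>. \<forall>u\<in>J. \<omega> u \<in> A u}"
    using cylinder_GW(2)[OF J] by simp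
  also have "{\<omega>. \<forall>u\<in>J. \<omega> u \<in> A u} = prod_emb UNIV ?M J (Pi\<^sub>E J A)"
    by (auto simp: prod_emb_def space_PiM restrict_PiE_iff)
  finally show "emeasure ?G (prod_emb UNIV ?M J (Pi\<^sub>E J A)) =
      emeasure (distr ?P ?G graft) (prod_emb UNIV ?M J (Pi\<^sub>E J A))"
    by simp
qed

theorem nn_integral_GW_branching:
  fixes g :: "nat \<Rightarrow> gw_sample \<Rightarrow> ennreal"
  assumes g: "\<And>j. g j \<in> borel_measurable sample_space"
  shows "(\<integral>\<^sup>+\<omega>. (\<Prod>j\<in>{1..N}. \<Prod>k<\<omega> [] j. g j (subtree (j, k) \<omega>)) \<partial>GW N Gam lam i) =
    (\<integral>\<^sup>+x. (\<Prod>j\<in>{1..N}. (\<integral>\<^sup>+\<omega>. g j \<omega> \<partial>GW N Gam lam j) ^ x j) \<partial>offspring N Gam lam i)"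
proof -
  let ?f = "\<lambda>\<omega>. \<Prod>j\<in>{1..N}. \<Prod>k<\<omega> [] j. g j (subtree (j, k) \<omega>)"
  let ?P = "measure_pmf (offspring N Gam lam i) \<Otimes>\<^sub>M subtree_law N Gam lam"
  interpret S: prob_space "subtree_law N Gam lam" by (rule prob_space_subtree_law)
  have f: "?f \<in> borel_measurable sample_space"
    by (rule measurable_prod_subtrees[OF g])
  have graft: "graft \<in> measurable ?P (GW N Gam lam i)"
    using measurable_graft by (simp only: measurable_GW_eq)
  have "(\<integral>\<^sup>+\<omega>. ?f \<omega> \<partial>GW N Gam lam i) = (\<integral>\<^sup>+p. ?f (graft p) \<partial>?P)"
    using f by (subst (1) distr_graft_GW[symmetric]) (simp add: nn_integral_distr[OF graft] measurable_GW_eq)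
  also have "\<dots> = (\<integral>\<^sup>+x. \<integral>\<^sup>+ws. ?f (graft (x, ws)) \<partial>subtree_law N Gam lam \<partial>offspring N Gam lam i)"
    using f by (intro S.nn_integral_fst[symmetric]) simp
  also have "\<dots> = (\<integral>\<^sup>+x. (\<Prod>j\<in>{1..N}. (\<integral>\<^sup>+\<omega>. g j \<omega> \<partial>GW N Gam lam j) ^ x j) \<partial>offspring N Gam lam i)"
  proof (rule nn_integral_cong)
    fix x :: "nat \<Rightarrow> nat"
    have "(\<integral>\<^sup>+ws. ?f (graft (x, ws)) \<partial>subtree_law N Gam lam) =
        (\<integral>\<^sup>+ws. (\<Prod>c\<in>children N x. g (fst c) (ws c)) \<partial>subtree_law N Gam lam)"
      by (simp add: prod_children)
    also have "\<dots> = (\<Prod>c\<in>children N x. \<integral>\<^sup>+\<omega>. g (fst c) \<omega> \<partial>GW N Gam lam (fst c))"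
      unfolding subtree_law_def using g
      by (intro nn_integral_PiM_prod prob_space_GW finite_children) (simp add: measurable_GW_eq)
    finally show "(\<integral>\<^sup>+ws. ?f (graft (x, ws)) \<partial>subtree_law N Gam lam) =
        (\<Prod>j\<in>{1..N}. (\<integral>\<^sup>+\<omega>. g j \<omega> \<partial>GW N Gam lam j) ^ x j)"
      by (simp add: prod_children)
  qed
  finally show ?thesis .
qed

section \<open>Weighted population totals\<close>

primrec truncated_total :: "nat \<Rightarrow> nat \<Rightarrow> (nat \<Rightarrow> real) \<Rightarrow> nat \<Rightarrow> gw_sample \<Rightarrow> real" where
  "truncated_total N 0 \<theta> i \<omega> = 0"
| "truncated_total N (Suc n) \<theta> i \<omega> =
     \<theta> i + (\<Sum>j\<in>{1..N}. \<Sum>k<\<omega> [] j. truncated_total N n \<theta> j (subtree (j, k) \<omega>))"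

text \<open>The total weight \<open>\<Sum>u. \<theta> (ptype i u)\<close> of the population, defined as a limit over
  generations so that it is measurable; it is the sum itself whenever the population is finite.\<close>
definition weighted_total :: "nat \<Rightarrow> (nat \<Rightarrow> real) \<Rightarrow> nat \<Rightarrow> gw_sample \<Rightarrow> real" where
  "weighted_total N \<theta> i \<omega> = lim (\<lambda>n. truncated_total N n \<theta> i \<omega>)"

lemma truncated_total_eq_sum:
  "truncated_total N n \<theta> i \<omega> = (\<Sum>u\<in>population_below N n \<omega>. \<theta> (ptype i u))"
proof (induction n arbitrary: i \<omega>)
  case 0
  then show ?case by (simp add: population_below_def)
next
  case (Suc n)
  have "(\<Sum>u\<in>population_below N (Suc n) \<omega>. \<theta> (ptype i u)) =
      \<theta> i + (\<Sum>c\<in>children N (\<omega> []). \<Sum>u\<in>population_below N n (subtree c \<omega>). \<theta> (ptype (fst c) u))"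
    unfolding population_below_Suc by (subst sum_insert_Nil_Cons) (simp_all add: ptype_Cons, simp add: ptype_def)
  also have "\<dots> = \<theta> i + (\<Sum>c\<in>children N (\<omega> []). truncated_total N n \<theta> (fst c) (subtree c \<omega>))"
    by (simp add: Suc.IH)
  finally show ?case by (simp add: sum_children)
qed

lemma truncated_total_const:
  "truncated_total N n (\<lambda>_. r) i \<omega> = r * real (card (population_below N n \<omega>))"
  by (simp add: truncated_total_eq_sum)

lemma measurable_truncated_total [measurable]:
  "truncated_total N n \<theta> i \<in> borel_measurable sample_space"
proof (induction n arbitrary: i)
  case 0
  then show ?case by simp
next
  case (Suc n)
  have "(\<lambda>\<omega>. \<Sum>k<\<omega> [] j. truncated_total N n \<theta> j (subtree (j, k) \<omega>)) \<in> borel_measurable sample_space" for j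
  proof (rule measurable_compose_countable'
      [where f="\<lambda>m \<omega>. \<Sum>k<m. truncated_total N n \<theta> j (subtree (j, k) \<omega>)" and I=UNIV])
    fix m :: nat
    show "(\<lambda>\<omega>. \<Sum>k<m. truncated_total N n \<theta> j (subtree (j, k) \<omega>)) \<in> borel_measurable sample_space"
      using Suc by (intro borel_measurable_sum) (rule measurable_compose[OF measurable_subtree])
  qed auto
  then show ?case by simp
qed

lemma measurable_weighted_total [measurable]: "weighted_total N \<theta> i \<in> borel_measurable sample_space"
  unfolding weighted_total_def by measurable

lemma weighted_total_eq_sum:
  assumes "finite (population N \<omega>)"
  shows "weighted_total N \<theta> i \<omega> = (\<Sum>u\<in>population N \<omega>. \<theta> (ptype i u))"
proof -
  have "eventually (\<lambda>n. truncated_total N n \<theta> i \<omega> = (\<Sum>u\<in>population N \<omega>. \<theta> (ptype i u))) sequentially"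
    using eventually_population_below_eq[OF assms] by eventually_elim (simp add: truncated_total_eq_sum)
  then show ?thesis
    unfolding weighted_total_def by (intro limI tendsto_eventually)
qed

lemma weighted_total_rec:
  assumes "finite (population N \<omega>)"
  shows "weighted_total N \<theta> i \<omega> =
    \<theta> i + (\<Sum>j\<in>{1..N}. \<Sum>k<\<omega> [] j. weighted_total N \<theta> j (subtree (j, k) \<omega>))"
proof -
  have "weighted_total N \<theta> i \<omega> =
      \<theta> i + (\<Sum>c\<in>children N (\<omega> []). \<Sum>u\<in>population N (subtree c \<omega>). \<theta> (ptype (fst c) u))"
    using assms finite_population_subtree[OF assms] unfolding weighted_total_eq_sum[OF assms]
    by (subst population_decomp, subst sum_insert_Nil_Cons) (simp_all add: ptype_Cons, simp add: ptype_def)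
  also have "\<dots> = \<theta> i + (\<Sum>c\<in>children N (\<omega> []). weighted_total N \<theta> (fst c) (subtree c \<omega>))"
    using finite_population_subtree[OF assms] by (simp add: weighted_total_eq_sum)
  finally show ?thesis by (simp add: sum_children)
qed

lemma weighted_total_le:
  assumes "finite (population N \<omega>)" "i \<in> {1..N}" "\<forall>j\<in>{1..N}. \<theta> j \<le> r"
  shows "weighted_total N \<theta> i \<omega> \<le> r * real (card (population N \<omega>))"
proof -
  have "weighted_total N \<theta> i \<omega> \<le> (\<Sum>u\<in>population N \<omega>. r)"
    unfolding weighted_total_eq_sum[OF assms(1)]
    using assms(2,3) ptype_alive by (intro sum_mono) (auto simp: population_def)
  then show ?thesis by (simp add: mult.commute)
qed

lemma sum_Wvec_eq_weighted_total:
  assumes "finite (population N \<omega>)" "i \<in> {1..N}"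
  shows "(\<Sum>j\<in>{1..N}. \<theta> j * real (Wvec N i j \<omega>)) = weighted_total N \<theta> i \<omega>"
proof -
  have "(\<Sum>u\<in>population N \<omega>. \<theta> (ptype i u)) =
      (\<Sum>j\<in>{1..N}. \<Sum>u\<in>{u\<in>population N \<omega>. ptype i u = j}. \<theta> (ptype i u))"
    using assms ptype_alive by (intro sum.group[symmetric]) (auto simp: population_def)
  also have "\<dots> = (\<Sum>j\<in>{1..N}. \<theta> j * real (Wvec N i j \<omega>))"
    by (intro sum.cong refl) (simp add: Wvec_def population_def)
  finally show ?thesis
    using assms(1) by (simp add: weighted_total_eq_sum)
qed

lemma ennreal_exp_add_double_sum:
  fixes m :: "'a \<Rightarrow> nat"
  shows "ennreal (exp (a + (\<Sum>j\<in>A. \<Sum>k<m j. f j k))) =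
     ennreal (exp a) * (\<Prod>j\<in>A. \<Prod>k<m j. ennreal (exp (f j k)))"
proof (cases "finite A")
  case True
  have "exp (\<Sum>k<m j. f j k) = (\<Prod>k<m j. exp (f j k))" for j
    by (simp add: exp_sum)
  then have "exp (\<Sum>j\<in>A. \<Sum>k<m j. f j k) = (\<Prod>j\<in>A. \<Prod>k<m j. exp (f j k))"
    using True by (simp add: exp_sum)
  then show ?thesis
    by (simp add: exp_add ennreal_mult' prod_ennreal prod_nonneg)
qed simp

lemma prod_ennreal_exp_power:
  "(\<Prod>j\<in>A. ennreal (exp (y j)) ^ x j) = ennreal (exp (\<Sum>j\<in>A. y j * real (x j)))"
proof -
  have "(\<Prod>j\<in>A. ennreal (exp (y j)) ^ x j) = (\<Prod>j\<in>A. ennreal (exp (y j * real (x j))))"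
    by (intro prod.cong refl) (simp add: ennreal_power exp_of_nat_mult[symmetric] mult.commute)
  then show ?thesis
    by (cases "finite A") (simp_all add: prod_ennreal exp_sum)
qed

section \<open>Exponential moments of the population\<close>

lemma nn_integral_exp_truncated_total_le:
  assumes "0 \<le> b" and contract: "\<forall>j\<in>{1..N}. mgfX N Gam lam j (\<lambda>_. b) \<le> ennreal (exp (b - r))"
    and "i \<in> {1..N}"
  shows "(\<integral>\<^sup>+\<omega>. ennreal (exp (truncated_total N n (\<lambda>_. r) i \<omega>)) \<partial>GW N Gam lam i) \<le> ennreal (exp b)"
  using \<open>i \<in> {1..N}\<close>
proof (induction n arbitrary: i)
  case 0
  interpret prob_space "GW N Gam lam i" by (rule prob_space_GW)
  show ?case using \<open>0 \<le> b\<close> by (simp add: emeasure_space_1[simplified])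
next
  case (Suc n)
  let ?g = "\<lambda>j \<omega>. ennreal (exp (truncated_total N n (\<lambda>_. r) j \<omega>))"
  have g: "?g j \<in> borel_measurable sample_space" for j
    by measurable
  have "(\<integral>\<^sup>+\<omega>. ennreal (exp (truncated_total N (Suc n) (\<lambda>_. r) i \<omega>)) \<partial>GW N Gam lam i) =
      ennreal (exp r) * (\<integral>\<^sup>+\<omega>. (\<Prod>j\<in>{1..N}. \<Prod>k<\<omega> [] j. ?g j (subtree (j, k) \<omega>)) \<partial>GW N Gam lam i)"
    using measurable_prod_subtrees[OF g]
    by (simp only: truncated_total.simps ennreal_exp_add_double_sum nn_integral_cmult measurable_GW_eq)
  also have "\<dots> = ennreal (exp r) *
      (\<integral>\<^sup>+x. (\<Prod>j\<in>{1..N}. (\<integral>\<^sup>+\<omega>. ?g j \<omega> \<partial>GW N Gam lam j) ^ x j) \<partial>offspring N Gam lam i)"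
    by (simp only: nn_integral_GW_branching[OF g])
  also have "\<dots> \<le> ennreal (exp r) * (\<integral>\<^sup>+x. (\<Prod>j\<in>{1..N}. ennreal (exp b) ^ x j) \<partial>offspring N Gam lam i)"
    by (intro mult_left_mono nn_integral_mono prod_mono_ennreal power_mono Suc.IH) auto
  also have "\<dots> = ennreal (exp r) * mgfX N Gam lam i (\<lambda>_. b)"
    by (simp only: mgfX_def prod_ennreal_exp_power)
  also have "\<dots> \<le> ennreal (exp r) * ennreal (exp (b - r))"
    using contract Suc.prems by (intro mult_left_mono) auto
  also have "\<dots> = ennreal (exp b)"
    by (simp flip: ennreal_mult exp_add)
  finally show ?case .
qed

lemma finite_population_if_SUP_exp_finite:
  fixes r :: real
  assumes "0 < r" "(SUP n. ennreal (exp (r * real (card (population_below N n \<omega>))))) \<noteq> \<infinity>"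
  shows "finite (population N \<omega>)"
proof (rule finite_population_if_bounded)
  let ?H = "SUP n. ennreal (exp (r * real (card (population_below N n \<omega>))))"
  fix n
  have "ennreal (exp (r * real (card (population_below N n \<omega>)))) \<le> ?H"
    by (rule SUP_upper) simp
  then have "enn2real (ennreal (exp (r * real (card (population_below N n \<omega>))))) \<le> enn2real ?H"
    by (rule enn2real_mono) (simp only: less_top[symmetric] assms(2)[unfolded infinity_ennreal_def] not_False_eq_True)
  then have "exp (r * real (card (population_below N n \<omega>))) \<le> enn2real ?H"
    by simp
  then have "r * real (card (population_below N n \<omega>)) \<le> enn2real ?H"
    using exp_ge_add_one_self[of "r * real (card (population_below N n \<omega>))"] by linarith
  then have "real (card (population_below N n \<omega>)) \<le> enn2real ?H / r"
    using \<open>0 < r\<close> by (simp add: le_divide_eq mult.commute)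
  then show "card (population_below N n \<omega>) \<le> nat \<lceil>enn2real ?H / r\<rceil>"
    by (meson of_nat_le_iff order_trans real_nat_ceiling_ge)
qed

lemma exp_card_population_le_SUP:
  assumes "finite (population N \<omega>)"
  shows "ennreal (exp (r * real (card (population N \<omega>)))) \<le>
    (SUP n. ennreal (exp (r * real (card (population_below N n \<omega>)))))"
proof -
  obtain n where "population_below N n \<omega> = population N \<omega>"
    using eventually_population_below_eq[OF assms] by (auto simp: eventually_sequentially)
  then show ?thesis
    by (metis (mono_tags, lifting) SUP_upper UNIV_I)
qed

lemma population_exp_moment:
  fixes r B :: real
  assumes "0 < r"
    and bound: "\<And>n. (\<integral>\<^sup>+\<omega>. ennreal (exp (r * real (card (population_below N n \<omega>)))) \<partial>M) \<le> ennreal B"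
    and meas: "sets M = sets sample_space"
  shows "AE \<omega> in M. finite (population N \<omega>)"
    and "(\<integral>\<^sup>+\<omega>. ennreal (exp (r * real (card (population N \<omega>)))) \<partial>M) \<le> ennreal B"
proof -
  let ?f = "\<lambda>n \<omega>. ennreal (exp (r * real (card (population_below N n \<omega>))))"
  define H where "H \<omega> = (SUP n. ?f n \<omega>)" for \<omega>
  have [measurable]: "(\<lambda>\<omega>. real (card (population_below N n \<omega>))) \<in> borel_measurable M" for n
  proof -
    have "(\<lambda>\<omega>. truncated_total N n (\<lambda>_. 1) 0 \<omega>) \<in> borel_measurable sample_space"
      by measurable
    then show ?thesis
      by (simp add: measurable_cong_sets[OF meas refl] truncated_total_const)
  qed
  have f: "?f n \<in> borel_measurable M" for n
    by measurable
  have "incseq ?f"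
    using \<open>0 < r\<close> by (intro incseq_SucI le_funI ennreal_leI) (simp add: card_mono population_below_mono)
  then have "(\<integral>\<^sup>+\<omega>. H \<omega> \<partial>M) = (SUP n. \<integral>\<^sup>+\<omega>. ?f n \<omega> \<partial>M)"
    unfolding H_def using f by (rule nn_integral_monotone_convergence_SUP)
  also have "\<dots> \<le> ennreal B"
    using bound by (intro SUP_least)
  finally have H_int: "(\<integral>\<^sup>+\<omega>. H \<omega> \<partial>M) \<le> ennreal B" .
  have "AE \<omega> in M. H \<omega> \<noteq> \<infinity>"
    using H_int f by (intro nn_integral_PInf_AE) (auto simp: H_def top_unique)
  then show fin: "AE \<omega> in M. finite (population N \<omega>)"
    unfolding H_def by eventually_elim (rule finite_population_if_SUP_exp_finite[OF \<open>0 < r\<close>])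
  have "AE \<omega> in M. ennreal (exp (r * real (card (population N \<omega>)))) \<le> H \<omega>"
    using fin unfolding H_def by eventually_elim (rule exp_card_population_le_SUP)
  then have "(\<integral>\<^sup>+\<omega>. ennreal (exp (r * real (card (population N \<omega>)))) \<partial>M) \<le> (\<integral>\<^sup>+\<omega>. H \<omega> \<partial>M)"
    by (rule nn_integral_mono_AE)
  with H_int show "(\<integral>\<^sup>+\<omega>. ennreal (exp (r * real (card (population N \<omega>)))) \<partial>M) \<le> ennreal B"
    by (rule order_trans[rotated])
qed

lemma mgfW_eq_nn_integral_weighted_total:
  assumes "AE \<omega> in GW N Gam lam i. finite (population N \<omega>)" "i \<in> {1..N}"
  shows "mgfW N Gam lam i \<theta> = (\<integral>\<^sup>+\<omega>. ennreal (exp (weighted_total N \<theta> i \<omega>)) \<partial>GW N Gam lam i)"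
  unfolding mgfW_def
proof (rule nn_integral_cong_AE)
  show "AE \<omega> in GW N Gam lam i. ennreal (exp (\<Sum>j\<in>{1..N}. \<theta> j * real (Wvec N i j \<omega>))) =
      ennreal (exp (weighted_total N \<theta> i \<omega>))"
    using assms(1) by eventually_elim (simp only: sum_Wvec_eq_weighted_total[OF _ assms(2)])
qed

lemma mgfW_le_exp_population:
  fixes r :: real
  assumes "AE \<omega> in GW N Gam lam i. finite (population N \<omega>)" "i \<in> {1..N}" "\<forall>j\<in>{1..N}. \<theta> j \<le> r"
  shows "mgfW N Gam lam i \<theta> \<le> (\<integral>\<^sup>+\<omega>. ennreal (exp (r * real (card (population N \<omega>)))) \<partial>GW N Gam lam i)"
  unfolding mgfW_eq_nn_integral_weighted_total[OF assms(1,2)]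
proof (rule nn_integral_mono_AE)
  show "AE \<omega> in GW N Gam lam i. ennreal (exp (weighted_total N \<theta> i \<omega>)) \<le>
      ennreal (exp (r * real (card (population N \<omega>))))"
    using assms(1) by eventually_elim (metis weighted_total_le assms(2,3) ennreal_leI exp_le_cancel_iff)
qed

lemma GW_exp_moment:
  assumes "0 \<le> b" "0 < r" "\<forall>j\<in>{1..N}. mgfX N Gam lam j (\<lambda>_. b) \<le> ennreal (exp (b - r))"
    and i: "i \<in> {1..N}"
  shows "AE \<omega> in GW N Gam lam i. finite (population N \<omega>)"
    and "\<forall>j\<in>{1..N}. \<theta> j \<le> r \<Longrightarrow> mgfW N Gam lam i \<theta> < \<infinity>"
proof -
  have "(\<integral>\<^sup>+\<omega>. ennreal (exp (r * real (card (population_below N n \<omega>)))) \<partial>GW N Gam lam i) \<le> ennreal (exp b)"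
    for n
    using nn_integral_exp_truncated_total_le[OF assms(1,3) i] by (simp add: truncated_total_const)
  note population = population_exp_moment[OF \<open>0 < r\<close> this sets_GW]
  then show "AE \<omega> in GW N Gam lam i. finite (population N \<omega>)"
    by blast
  assume "\<forall>j\<in>{1..N}. \<theta> j \<le> r"
  then have "mgfW N Gam lam i \<theta> \<le> ennreal (exp b)"
    using order_trans[OF mgfW_le_exp_population[OF population(1) i] population(2)] by blast
  then show "mgfW N Gam lam i \<theta> < \<infinity>"
    by (simp add: le_less_trans)
qed

section \<open>The fixed-point equation\<close>

lemma (in prob_space) nn_integral_pos_neq_0:
  assumes "f \<in> borel_measurable M" "\<And>x. 0 < f x"
  shows "(\<integral>\<^sup>+x. f x \<partial>M) \<noteq> 0"
proof
  assume "(\<integral>\<^sup>+x. f x \<partial>M) = 0"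
  then have "AE x in M. f x = 0"
    using assms(1) by (simp add: nn_integral_0_iff_AE)
  then have "AE x in M. False"
    by (rule AE_mp) (rule AE_I2, metis assms(2) less_irrefl)
  then show False
    by simp
qed

lemma nn_integral_exp_weighted_total_rec:
  assumes "AE \<omega> in GW N Gam lam i. finite (population N \<omega>)"
  shows "(\<integral>\<^sup>+\<omega>. ennreal (exp (weighted_total N \<theta> i \<omega>)) \<partial>GW N Gam lam i) =
    ennreal (exp (\<theta> i)) * (\<integral>\<^sup>+x. (\<Prod>j\<in>{1..N}.
      (\<integral>\<^sup>+\<omega>. ennreal (exp (weighted_total N \<theta> j \<omega>)) \<partial>GW N Gam lam j) ^ x j) \<partial>offspring N Gam lam i)"
proof -
  let ?g = "\<lambda>j \<omega>. ennreal (exp (weighted_total N \<theta> j \<omega>))"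
  have g: "?g j \<in> borel_measurable sample_space" for j
    by measurable
  have "AE \<omega> in GW N Gam lam i.
      ?g i \<omega> = ennreal (exp (\<theta> i)) * (\<Prod>j\<in>{1..N}. \<Prod>k<\<omega> [] j. ?g j (subtree (j, k) \<omega>))"
    using assms by eventually_elim (simp only: weighted_total_rec ennreal_exp_add_double_sum)
  then have "(\<integral>\<^sup>+\<omega>. ?g i \<omega> \<partial>GW N Gam lam i) =
      (\<integral>\<^sup>+\<omega>. ennreal (exp (\<theta> i)) * (\<Prod>j\<in>{1..N}. \<Prod>k<\<omega> [] j. ?g j (subtree (j, k) \<omega>)) \<partial>GW N Gam lam i)"
    by (rule nn_integral_cong_AE)
  also have "\<dots> = ennreal (exp (\<theta> i)) *
      (\<integral>\<^sup>+\<omega>. (\<Prod>j\<in>{1..N}. \<Prod>k<\<omega> [] j. ?g j (subtree (j, k) \<omega>)) \<partial>GW N Gam lam i)"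
    using measurable_prod_subtrees[OF g] by (simp add: nn_integral_cmult measurable_GW_eq)
  finally show ?thesis
    by (simp only: nn_integral_GW_branching[OF g])
qed

theorem mgfW_fixed_point:
  assumes finite: "\<forall>j\<in>{1..N}. AE \<omega> in GW N Gam lam j. finite (population N \<omega>)"
    and bounded: "\<forall>j\<in>{1..N}. mgfW N Gam lam j \<theta> < \<infinity>"
    and i: "i \<in> {1..N}"
  shows "mgfX N Gam lam i (\<lambda>j. Phi N Gam lam j \<theta>) < \<infinity>"
    and "Phi N Gam lam i \<theta> = \<theta> i + phi N Gam lam i (\<lambda>j. Phi N Gam lam j \<theta>)"
proof -
  let ?X = "mgfX N Gam lam i (\<lambda>j. Phi N Gam lam j \<theta>)"
  have mgfW_exp_Phi: "mgfW N Gam lam j \<theta> = ennreal (exp (Phi N Gam lam j \<theta>))" if j: "j \<in> {1..N}" for j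
  proof -
    interpret prob_space "GW N Gam lam j" by (rule prob_space_GW)
    have "mgfW N Gam lam j \<theta> \<noteq> 0"
      unfolding mgfW_eq_nn_integral_weighted_total[OF finite[rule_format, OF j] j]
      by (intro nn_integral_pos_neq_0) (simp_all add: measurable_GW_eq)
    then have "0 < enn2real (mgfW N Gam lam j \<theta>)"
      using bounded j by (simp add: enn2real_positive_iff zero_less_iff_neq_zero)
    then show ?thesis
      using bounded j by (simp add: Phi_def)
  qed
  have "mgfW N Gam lam i \<theta> = ennreal (exp (\<theta> i)) *
      (\<integral>\<^sup>+x. (\<Prod>j\<in>{1..N}. ennreal (exp (Phi N Gam lam j \<theta>)) ^ x j) \<partial>offspring N Gam lam i)"
    unfolding mgfW_eq_nn_integral_weighted_total[OF finite[rule_format, OF i] i]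
      nn_integral_exp_weighted_total_rec[OF finite[rule_format, OF i]]
    using finite by (intro arg_cong2[where f="(*)"] refl nn_integral_cong prod.cong)
      (simp_all add: mgfW_exp_Phi flip: mgfW_eq_nn_integral_weighted_total)
  also have "\<dots> = ennreal (exp (\<theta> i)) * ?X"
    by (simp only: mgfX_def prod_ennreal_exp_power)
  finally have rec: "mgfW N Gam lam i \<theta> = ennreal (exp (\<theta> i)) * ?X" .
  moreover have "mgfW N Gam lam i \<theta> < \<infinity>"
    using bounded i by blast
  ultimately show X_finite: "?X < \<infinity>"
    by (auto simp: ennreal_mult_less_top)
  have "?X \<noteq> 0"
    using rec mgfW_exp_Phi[OF i] by auto
  then have "0 < enn2real ?X"
    using X_finite by (simp add: enn2real_positive_iff zero_less_iff_neq_zero)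
  have "Phi N Gam lam i \<theta> = ln (exp (\<theta> i) * enn2real ?X)"
    unfolding Phi_def rec by (simp add: enn2real_mult)
  also have "\<dots> = \<theta> i + phi N Gam lam i (\<lambda>j. Phi N Gam lam j \<theta>)"
    using \<open>0 < enn2real ?X\<close> by (simp add: ln_mult phi_def)
  finally show "Phi N Gam lam i \<theta> = \<theta> i + phi N Gam lam i (\<lambda>j. Phi N Gam lam j \<theta>)" .
qed

section \<open>Choice of the exponents\<close>

lemma sums_poisson_mean: "(\<lambda>n. a ^ n / fact n * exp (- a) * real n) sums (a :: real)"
proof -
  have "(\<lambda>m. a * (a ^ m / fact m) * exp (- a)) sums (a * exp a * exp (- a))"
    using exp_converges[of a] by (intro sums_mult2 sums_mult) (simp add: divide_inverse mult.commute)
  moreover have "a ^ Suc m / fact (Suc m) * exp (- a) * real (Suc m) = a * (a ^ m / fact m) * exp (- a)" for m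
    by (simp add: field_simps del: of_nat_Suc)
  ultimately have "(\<lambda>m. a ^ Suc m / fact (Suc m) * exp (- a) * real (Suc m)) sums a"
    by (simp add: mult.assoc flip: exp_add)
  then show ?thesis
    using sums_Suc_iff[where f="\<lambda>n. a ^ n / fact n * exp (- a) * real n" and s=a] by simp
qed

lemma nn_integral_pois_id:
  assumes "0 \<le> a"
  shows "(\<integral>\<^sup>+n. ennreal (real n) \<partial>pois a) = ennreal a"
proof (cases "a = 0")
  case False
  then have "0 < a" using assms by simp
  then have "(\<integral>\<^sup>+n. ennreal (real n) \<partial>pois a) = (\<Sum>n. ennreal (a ^ n / fact n * exp (- a) * real n))"
    by (simp add: pois_def nn_integral_measure_pmf nn_integral_count_space_nat ennreal_mult'' flip: ennreal_mult)
  also have "\<dots> = ennreal a"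
    using sums_poisson_mean[of a] \<open>0 < a\<close> by (intro sums_unique[symmetric]) (simp add: sums_ennreal)
  finally show ?thesis .
qed (simp add: pois_def)

lemma nn_integral_offspring_size:
  assumes "\<forall>j\<in>{1..N}. Gam j > 0"
  shows "(\<integral>\<^sup>+x. ennreal (\<Sum>j\<in>{1..N}. real (x j)) \<partial>offspring N Gam lam i) =
    (\<integral>\<^sup>+v. ennreal (Pv N Gam v) \<partial>lam i)"
  unfolding offspring_def nn_integral_bind_pmf
proof (rule nn_integral_cong)
  fix v
  let ?P = "Pi_pmf {1..N} 0 (\<lambda>j. pois (Gam j * measure lborel (psec j v)))"
  have nonneg: "0 \<le> Gam j * measure lborel (psec j v)" if "j \<in> {1..N}" for j
    using assms that by (simp add: less_imp_le)
  have "(\<integral>\<^sup>+x. ennreal (\<Sum>j\<in>{1..N}. real (x j)) \<partial>?P) = (\<integral>\<^sup>+x. (\<Sum>j\<in>{1..N}. ennreal (real (x j))) \<partial>?P)"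
    by simp
  also have "\<dots> = (\<Sum>j\<in>{1..N}. \<integral>\<^sup>+x. ennreal (real (x j)) \<partial>?P)"
    by (rule nn_integral_sum) simp
  also have "\<dots> = (\<Sum>j\<in>{1..N}. \<integral>\<^sup>+n. ennreal (real n) \<partial>map_pmf (\<lambda>x. x j) ?P)"
    by simp
  also have "\<dots> = (\<Sum>j\<in>{1..N}. ennreal (Gam j * measure lborel (psec j v)))"
    by (intro sum.cong refl) (simp add: Pi_pmf_component nn_integral_pois_id nonneg)
  also have "\<dots> = ennreal (Pv N Gam v)"
    unfolding Pv_def using nonneg by (rule sum_ennreal)
  finally show "(\<integral>\<^sup>+x. ennreal (\<Sum>j\<in>{1..N}. real (x j)) \<partial>?P) = ennreal (Pv N Gam v)" .
qed

lemma mgfX_const: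
  "mgfX N Gam lam i (\<lambda>_. b) = (\<integral>\<^sup>+x. ennreal (exp (b * (\<Sum>j\<in>{1..N}. real (x j)))) \<partial>offspring N Gam lam i)"
  unfolding mgfX_def by (simp add: sum_distrib_left)

lemma exp_mult_le_quadratic:
  fixes y t :: real
  assumes "0 \<le> y" "0 \<le> t" "t \<le> 1"
  shows "exp (t * y) \<le> 1 + t * y + t\<^sup>2 * exp y"
proof -
  let ?tail = "\<lambda>x n. inverse (fact (n + 2)) * x ^ (n + 2) :: real"
  have summable: "summable (?tail x)" for x
    using summable_ignore_initial_segment[OF summable_exp[of x], of 2] by simp
  have "?tail (t * y) n \<le> t\<^sup>2 * ?tail y n" for n
  proof -
    have "t ^ (n + 2) = t\<^sup>2 * t ^ n"
      by (simp only: power_add mult.commute)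
    also have "\<dots> \<le> t\<^sup>2"
      using assms(2,3) by (simp add: mult_left_le power_le_one)
    finally have "t ^ (n + 2) \<le> t\<^sup>2" .
    then have "(t * y) ^ (n + 2) \<le> t\<^sup>2 * y ^ (n + 2)"
      unfolding power_mult_distrib using assms(1) by (intro mult_right_mono) auto
    then have "inverse (fact (n + 2)) * (t * y) ^ (n + 2) \<le> inverse (fact (n + 2)) * (t\<^sup>2 * y ^ (n + 2))"
      by (rule mult_left_mono) simp
    then show ?thesis
      by (metis mult.left_commute)
  qed
  then have "(\<Sum>n. ?tail (t * y) n) \<le> t\<^sup>2 * (\<Sum>n. ?tail y n)"
    using summable by (subst suminf_mult[symmetric]) (auto intro: suminf_le summable_mult)
  also have "\<dots> \<le> t\<^sup>2 * exp y"
    using exp_first_two_terms[of y] assms(1) summable[of y] suminf_nonneg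
    by (intro mult_left_mono) auto
  finally show ?thesis
    using exp_first_two_terms[of "t * y"] by simp
qed

lemma nn_integral_exp_mult_le:
  fixes Z :: "'a \<Rightarrow> real"
  assumes "prob_space M" "Z \<in> borel_measurable M" "\<And>x. 0 \<le> Z x" "0 \<le> b" "b \<le> b0" "0 < b0"
  shows "(\<integral>\<^sup>+x. ennreal (exp (b * Z x)) \<partial>M) \<le>
    1 + ennreal b * (\<integral>\<^sup>+x. ennreal (Z x) \<partial>M) + ennreal ((b / b0)\<^sup>2) * (\<integral>\<^sup>+x. ennreal (exp (b0 * Z x)) \<partial>M)"
proof -
  interpret prob_space M by fact
  have "ennreal (exp (b * Z x)) \<le> 1 + ennreal b * ennreal (Z x) + ennreal ((b / b0)\<^sup>2) * ennreal (exp (b0 * Z x))"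
    for x
  proof -
    have "exp (b * Z x) \<le> 1 + b * Z x + (b / b0)\<^sup>2 * exp (b0 * Z x)"
      using exp_mult_le_quadratic[of "b0 * Z x" "b / b0"] assms(3-6) by (simp add: mult.assoc)
    then have "ennreal (exp (b * Z x)) \<le> ennreal (1 + b * Z x + (b / b0)\<^sup>2 * exp (b0 * Z x))"
      by (rule ennreal_leI)
    also have "\<dots> = 1 + ennreal b * ennreal (Z x) + ennreal ((b / b0)\<^sup>2) * ennreal (exp (b0 * Z x))"
      using assms(3,4) by (simp add: ennreal_plus ennreal_mult)
    finally show ?thesis .
  qed
  then have "(\<integral>\<^sup>+x. ennreal (exp (b * Z x)) \<partial>M) \<le>
      (\<integral>\<^sup>+x. 1 + ennreal b * ennreal (Z x) + ennreal ((b / b0)\<^sup>2) * ennreal (exp (b0 * Z x)) \<partial>M)"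
    by (intro nn_integral_mono)
  also have "\<dots> = 1 + ennreal b * (\<integral>\<^sup>+x. ennreal (Z x) \<partial>M) +
      ennreal ((b / b0)\<^sup>2) * (\<integral>\<^sup>+x. ennreal (exp (b0 * Z x)) \<partial>M)"
    using assms(2) by (simp add: nn_integral_add nn_integral_cmult emeasure_space_1)
  finally show ?thesis .
qed

text \<open>\<open>E exp (b Z) = 1 + b E Z + O(b\<^sup>2)\<close> with \<open>E Z < 1\<close>, while \<open>exp b \<ge> 1 + b\<close>.\<close>
lemma eventually_nn_integral_exp_less_exp:
  fixes Z :: "'a \<Rightarrow> real"
  assumes "prob_space M" "Z \<in> borel_measurable M" "\<And>x. 0 \<le> Z x"
    and mean: "(\<integral>\<^sup>+x. ennreal (Z x) \<partial>M) < 1"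
    and moment: "(\<integral>\<^sup>+x. ennreal (exp (b0 * Z x)) \<partial>M) < \<infinity>" and "0 < b0"
  shows "\<forall>\<^sub>F b in at_right 0. (\<integral>\<^sup>+x. ennreal (exp (b * Z x)) \<partial>M) < ennreal (exp b)"
proof -
  define m where "m = enn2real (\<integral>\<^sup>+x. ennreal (Z x) \<partial>M)"
  define K where "K = enn2real (\<integral>\<^sup>+x. ennreal (exp (b0 * Z x)) \<partial>M)"
  have "(\<integral>\<^sup>+x. ennreal (Z x) \<partial>M) < top"
    using mean by (simp add: less_trans)
  then have m: "(\<integral>\<^sup>+x. ennreal (Z x) \<partial>M) = ennreal m" "0 \<le> m" "m < 1"
    using mean by (simp_all add: m_def)
  have K: "(\<integral>\<^sup>+x. ennreal (exp (b0 * Z x)) \<partial>M) = ennreal K" "0 \<le> K"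
    using moment by (simp_all add: K_def)
  define \<epsilon> where "\<epsilon> = min b0 ((1 - m) * b0\<^sup>2 / (K + 1))"
  have "(\<integral>\<^sup>+x. ennreal (exp (b * Z x)) \<partial>M) < ennreal (exp b)" if b: "0 < b" "b < \<epsilon>" for b
  proof -
    have "(\<integral>\<^sup>+x. ennreal (exp (b * Z x)) \<partial>M) \<le> ennreal (1 + b * m + (b / b0)\<^sup>2 * K)"
      using nn_integral_exp_mult_le[OF assms(1-3), of b b0] b m K \<open>0 < b0\<close>
      by (simp add: \<epsilon>_def ennreal_plus ennreal_mult)
    also have "\<dots> < ennreal (exp b)"
    proof (intro ennreal_lessI)
      have "b * K < (1 - m) * b0\<^sup>2"
        using b K(2) by (simp add: \<epsilon>_def field_simps)
      then have "b * K / b0\<^sup>2 < 1 - m"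
        using \<open>0 < b0\<close> by (simp add: field_simps)
      then have "(b / b0)\<^sup>2 * K < b * (1 - m)"
        using b(1) mult_strict_left_mono[of "b * K / b0\<^sup>2" "1 - m" b]
        by (simp add: power2_eq_square field_simps)
      then have "1 + b * m + (b / b0)\<^sup>2 * K < 1 + b"
        by (simp add: algebra_simps)
      also have "\<dots> \<le> exp b"
        by (rule exp_ge_add_one_self)
      finally show "1 + b * m + (b / b0)\<^sup>2 * K < exp b" .
    qed simp
    finally show ?thesis .
  qed
  moreover have "0 < \<epsilon>"
    using \<open>0 < b0\<close> m K by (simp add: \<epsilon>_def)
  ultimately show ?thesis
    unfolding eventually_at_right_field by auto
qed

lemma exists_contraction_exponents:
  assumes Gam_pos: "\<forall>j\<in>{1..N}. Gam j > 0"
    and subcrit: "\<forall>i\<in>{1..N}. (\<integral>\<^sup>+ v. ennreal (Pv N Gam v) \<partial>measure_pmf (lam i)) < 1"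
    and R_pos: "R > 0"
    and expmom: "\<forall>\<theta>. (\<forall>j\<in>{1..N}. 0 < \<theta> j \<and> \<theta> j < R) \<longrightarrow>
        (\<forall>i\<in>{1..N}. mgfX N Gam lam i \<theta> < \<infinity>)"
  obtains b r where "0 < b" "0 < r" "r < R"
    "\<forall>i\<in>{1..N}. mgfX N Gam lam i (\<lambda>_. b) \<le> ennreal (exp (b - r))"
proof -
  have "\<forall>\<^sub>F b in at_right 0. mgfX N Gam lam i (\<lambda>_. b) < ennreal (exp b)" if i: "i \<in> {1..N}" for i
    unfolding mgfX_const
  proof (rule eventually_nn_integral_exp_less_exp)
    show "(\<integral>\<^sup>+x. ennreal (\<Sum>j\<in>{1..N}. real (x j)) \<partial>offspring N Gam lam i) < 1"
      unfolding nn_integral_offspring_size[OF Gam_pos] using subcrit i by blast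
    show "(\<integral>\<^sup>+x. ennreal (exp (R / 2 * (\<Sum>j\<in>{1..N}. real (x j)))) \<partial>offspring N Gam lam i) < \<infinity>"
    proof -
      have "mgfX N Gam lam i (\<lambda>_. R / 2) < \<infinity>"
        using expmom R_pos i by simp
      then show ?thesis
        by (simp only: mgfX_const)
    qed
  qed (simp_all add: prob_space_measure_pmf sum_nonneg R_pos)
  then have "\<forall>\<^sub>F b in at_right 0. 0 < b \<and> (\<forall>i\<in>{1..N}. mgfX N Gam lam i (\<lambda>_. b) < ennreal (exp b))"
    by (intro eventually_conj eventually_at_right_less eventually_ball_finite) auto
  then obtain b where b: "0 < b" "\<forall>i\<in>{1..N}. mgfX N Gam lam i (\<lambda>_. b) < ennreal (exp b)"
    using eventually_happens'[OF trivial_limit_at_right_real] by blast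
  have "((\<lambda>r. ennreal (exp (b - r))) \<longlongrightarrow> ennreal (exp (b - 0))) (at_right 0)"
    by (intro tendsto_ennrealI tendsto_intros)
  then have "\<forall>\<^sub>F r in at_right 0. mgfX N Gam lam i (\<lambda>_. b) < ennreal (exp (b - r))" if "i \<in> {1..N}" for i
    using b(2) that by (intro order_tendstoD(1)) auto
  moreover have "\<forall>\<^sub>F r in at_right 0. r < R"
    unfolding eventually_at_right_field using R_pos by blast
  ultimately have "\<forall>\<^sub>F r in at_right 0. 0 < r \<and> r < R \<and>
      (\<forall>i\<in>{1..N}. mgfX N Gam lam i (\<lambda>_. b) < ennreal (exp (b - r)))"
    by (intro eventually_conj eventually_at_right_less eventually_ball_finite) auto
  then obtain r where "0 < r" "r < R" "\<forall>i\<in>{1..N}. mgfX N Gam lam i (\<lambda>_. b) < ennreal (exp (b - r))"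
    using eventually_happens'[OF trivial_limit_at_right_real] by blast
  with b(1) show ?thesis
    using that by (meson less_imp_le)
qed

section \<open>The tail bound\<close>

lemma measure_gt_le_exp:
  fixes W :: "'a \<Rightarrow> real" and g :: "'a \<Rightarrow> ennreal"
  assumes "prob_space M" "0 \<le> t" "g \<in> borel_measurable M"
    and "AE \<omega> in M. g \<omega> = ennreal (exp (t * W \<omega>))" "(\<integral>\<^sup>+\<omega>. g \<omega> \<partial>M) < \<infinity>"
  shows "measure M {\<omega> \<in> space M. W \<omega> > a} \<le> exp (- t * a) * enn2real (\<integral>\<^sup>+\<omega>. g \<omega> \<partial>M)"
proof (cases "{\<omega> \<in> space M. W \<omega> > a} \<in> sets M")
  case True
  have "emeasure M {\<omega> \<in> space M. W \<omega> > a} = (\<integral>\<^sup>+\<omega>. indicator {\<omega> \<in> space M. W \<omega> > a} \<omega> \<partial>M)"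
    using True by (rule nn_integral_indicator[symmetric])
  also have "\<dots> \<le> (\<integral>\<^sup>+\<omega>. ennreal (exp (- t * a)) * ennreal (exp (t * W \<omega>)) \<partial>M)"
  proof (intro nn_integral_mono)
    fix \<omega> assume "\<omega> \<in> space M"
    have "1 \<le> exp (- t * a) * exp (t * W \<omega>)" if "W \<omega> > a"
    proof -
      have "t * a \<le> t * W \<omega>"
        using \<open>0 \<le> t\<close> that by (intro mult_left_mono) auto
      then show ?thesis
        by (simp flip: exp_add)
    qed
    then show "indicator {\<omega> \<in> space M. W \<omega> > a} \<omega> \<le> ennreal (exp (- t * a)) * ennreal (exp (t * W \<omega>))"
      by (auto simp: indicator_def simp flip: ennreal_mult intro: ennreal_leI[where x=1, simplified])
  qed
  also have "\<dots> = (\<integral>\<^sup>+\<omega>. ennreal (exp (- t * a)) * g \<omega> \<partial>M)"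
    using assms(4) by (intro nn_integral_cong_AE) (auto elim: eventually_mono)
  also have "\<dots> = ennreal (exp (- t * a)) * (\<integral>\<^sup>+\<omega>. g \<omega> \<partial>M)"
    using assms(3) by (rule nn_integral_cmult)
  finally have "emeasure M {\<omega> \<in> space M. W \<omega> > a} \<le> ennreal (exp (- t * a)) * (\<integral>\<^sup>+\<omega>. g \<omega> \<partial>M)" .
  then have "measure M {\<omega> \<in> space M. W \<omega> > a} \<le> enn2real (ennreal (exp (- t * a)) * (\<integral>\<^sup>+\<omega>. g \<omega> \<partial>M))"
    unfolding measure_def using assms(5) by (intro enn2real_mono) (simp_all add: ennreal_mult_less_top)
  then show ?thesis
    by (simp add: enn2real_mult)
qed (simp add: measure_notin_sets)

lemma Wtot_upper_tail_le_exp: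
  assumes "AE \<omega> in GW N Gam lam i. finite (population N \<omega>)" "i \<in> {1..N}"
    and "0 \<le> t" "mgfW N Gam lam i (\<lambda>_. t) < \<infinity>"
  shows "\<exists>c0. \<forall>x. measure (GW N Gam lam i) {\<omega> \<in> space (GW N Gam lam i). real (Wtot N i \<omega>) > E + x}
    \<le> c0 * exp (- t * x)"
proof -
  let ?g = "\<lambda>\<omega>. ennreal (exp (weighted_total N (\<lambda>_. t) i \<omega>))"
  have "AE \<omega> in GW N Gam lam i. ?g \<omega> = ennreal (exp (t * real (Wtot N i \<omega>)))"
    using assms(1)
    by eventually_elim (simp only: sum_Wvec_eq_weighted_total[OF _ assms(2), symmetric] Wtot_def
        of_nat_sum sum_distrib_left)
  moreover have "(\<integral>\<^sup>+\<omega>. ?g \<omega> \<partial>GW N Gam lam i) < \<infinity>"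
    using assms(4) by (simp only: mgfW_eq_nn_integral_weighted_total[OF assms(1,2)])
  ultimately have "measure (GW N Gam lam i) {\<omega> \<in> space (GW N Gam lam i). real (Wtot N i \<omega>) > E + x}
      \<le> exp (- t * (E + x)) * enn2real (\<integral>\<^sup>+\<omega>. ?g \<omega> \<partial>GW N Gam lam i)" for x
    by (intro measure_gt_le_exp prob_space_GW assms(3)) (simp_all add: measurable_GW_eq)
  moreover have "exp (- t * (E + x)) = exp (- t * E) * exp (- t * x)" for x
    by (simp add: algebra_simps flip: exp_add)
  ultimately show ?thesis
    by (intro exI[of _ "exp (- t * E) * enn2real (\<integral>\<^sup>+\<omega>. ?g \<omega> \<partial>GW N Gam lam i)"])
      (simp add: mult_ac)
qed

theorem mainTheorem8:
  fixes N :: nat and Gam :: "nat \<Rightarrow> real"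
    and lam :: "nat \<Rightarrow> (nat \<times> real) set pmf" and R :: real
  assumes Gam_pos: "\<forall>j\<in>{1..N}. Gam j > 0"
    and nbhd: "\<forall>i\<in>{1..N}. \<forall>v\<in>set_pmf (lam i).
        v \<subseteq> {1..N} \<times> {..<0} \<and>
        (\<forall>j\<in>{1..N}. psec j v \<in> sets borel \<and> bounded (psec j v))"
    and subcrit: "\<forall>i\<in>{1..N}. (\<integral>\<^sup>+ v. ennreal (Pv N Gam v) \<partial>measure_pmf (lam i)) < 1"
    and R_pos: "R > 0"
    and expmom: "\<forall>\<theta>. (\<forall>j\<in>{1..N}. 0 < \<theta> j \<and> \<theta> j < R) \<longrightarrow>
        (\<forall>i\<in>{1..N}. mgfX N Gam lam i \<theta> < \<infinity>)"
  shows "\<exists>r. 0 < r \<and> r < R \<and>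
     (\<forall>\<theta>. (\<forall>j\<in>{1..N}. \<bar>\<theta> j\<bar> < r) \<longrightarrow>
        (\<forall>i\<in>{1..N}. mgfW N Gam lam i \<theta> < \<infinity> \<and>
           mgfX N Gam lam i (\<lambda>j. Phi N Gam lam j \<theta>) < \<infinity> \<and>
           Phi N Gam lam i \<theta> = \<theta> i + phi N Gam lam i (\<lambda>j. Phi N Gam lam j \<theta>))) \<and>
     (\<forall>ta. 0 \<le> ta \<and> ta < r \<longrightarrow>
        (\<forall>i\<in>{1..N}. \<exists>c0. \<forall>x>0.
           measure (GW N Gam lam i)
             {\<omega> \<in> space (GW N Gam lam i).
                real (Wtot N i \<omega>) > prob_space.expectation (GW N Gam lam i) (\<lambda>\<omega>. real (Wtot N i \<omega>)) + x}
           \<le> c0 * exp (- ta * x)))"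
proof -
  obtain b r where "0 < b" and r: "0 < r" "r < R"
    and contract: "\<forall>i\<in>{1..N}. mgfX N Gam lam i (\<lambda>_. b) \<le> ennreal (exp (b - r))"
    using exists_contraction_exponents[OF Gam_pos subcrit R_pos expmom] by blast
  note GW = GW_exp_moment[OF less_imp_le[OF \<open>0 < b\<close>] \<open>0 < r\<close> contract]
  show ?thesis
  proof (rule exI[of _ r], intro conjI r allI impI ballI)
    fix \<theta> :: "nat \<Rightarrow> real" and i assume \<theta>: "\<forall>j\<in>{1..N}. \<bar>\<theta> j\<bar> < r" and i: "i \<in> {1..N}"
    have "\<forall>j\<in>{1..N}. \<theta> j \<le> r"
      using \<theta> by (simp add: abs_less_iff less_imp_le)
    then have "\<forall>j\<in>{1..N}. mgfW N Gam lam j \<theta> < \<infinity>"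
      using GW(2) by blast
    with i show "mgfW N Gam lam i \<theta> < \<infinity>"
      and "mgfX N Gam lam i (\<lambda>j. Phi N Gam lam j \<theta>) < \<infinity>"
      and "Phi N Gam lam i \<theta> = \<theta> i + phi N Gam lam i (\<lambda>j. Phi N Gam lam j \<theta>)"
      using mgfW_fixed_point[of N Gam lam \<theta> i] GW(1) by blast+
  next
    fix ta :: real and i assume ta: "0 \<le> ta \<and> ta < r" and i: "i \<in> {1..N}"
    then have "mgfW N Gam lam i (\<lambda>_. ta) < \<infinity>"
      by (intro GW(2)) auto
    then show "\<exists>c0. \<forall>x>0. measure (GW N Gam lam i) {\<omega> \<in> space (GW N Gam lam i).
        real (Wtot N i \<omega>) > prob_space.expectation (GW N Gam lam i) (\<lambda>\<omega>. real (Wtot N i \<omega>)) + x}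
        \<le> c0 * exp (- ta * x)"
      using Wtot_upper_tail_le_exp[OF GW(1)[OF i] i] ta by blast
  qed
qed

end
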